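(* Let $Q$ be a smooth $m$-dimensional manifold with local coordinates $(q^\lambda)$, let $Q_R=\mathbb R\times Q\to\mathbb R$ with coordinate $\tau$ on $\mathbb R$, and let $(\tau,q^\lambda,q^\lambda_\tau)$, $(\tau,q^\lambda,q^\lambda_\tau,q^\lambda_{\tau\tau})$ be the induced coordinates on the first and second order jet manifolds of sections of $Q_R\to\mathbb R$. Let $N\ge1$ be an integer, let $G_{\alpha_1\ldots\alpha_{2N}}(q^\nu)$ be the components of a symmetric tensor field on $Q$ such that $G=G_{\alpha_1\ldots\alpha_{2N}}\dot q^{\alpha_1}\cdots\dot q^{\alpha_{2N}}>0$ on $TQ$ minus its zero section, and let $A=A_\mu(q^\nu)dq^\mu$ be a one-form on $Q$ with $F_{\lambda\mu}=\partial_\lambda A_\mu-\partial_\mu A_\lambda$. Consider the Lagrangian $L=(G^{1/2N}+q^\mu_\tau A_\mu)d\tau$, $G=G_{\alpha_1\ldots\alpha_{2N}}q^{\alpha_1}_\tau\cdots q^{\alpha_{2N}}_\tau$, on the complement in $J^1Q_R$ of $\mathbb R\times(\text{zero section})$, with Euler--Lagrange expressions $\mathcal E_\lambda=\partial_\lambda\mathcal L-d_\tau\partial^\tau_\lambda\mathcal L$, and define $$E_\beta=\Big(\tfrac{1}{2N}\partial_\beta G_{\mu\alpha_2\ldots\alpha_{2N}}-\partial_\mu G_{\beta\alpha_2\ldots\alpha_{2N}}\Big)q^\mu_\tau q^{\alpha_2}_\tau\cdots q^{\alpha_{2N}}_\tau-(2N-1)G_{\beta\mu\alpha_3\ldots\alpha_{2N}}q^\mu_{\tau\tau}q^{\alpha_3}_\tau\cdots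 q^{\alpha_{2N}}_\tau+G^{1-1/2N}F_{\beta\mu}q^\mu_\tau .$$ Let $W_G$ be the submanifold of $J^1Q_R$ given by $G=1$. Then any solution of the Lagrange equations $\mathcal E_\lambda=0$ whose first jet prolongation lies in $W_G$ is a solution of the equations $E_\beta=0$.
   Context: A solution means a section $\tau\mapsto(\tau,s^\lambda(\tau))$ of $Q_R\to\mathbb R$ (with nowhere vanishing velocity) whose jet prolongations satisfy the stated equations; $d_\tau=\partial_\tau+q^\lambda_\tau\partial_\lambda+q^\lambda_{\tau\tau}\partial^\tau_\lambda+\cdots$ is the total derivative and $\partial^\tau_\lambda=\partial/\partial q^\lambda_\tau$. One has $\mathcal E_\lambda=E_\beta[\delta^\beta_\lambda-q^\beta_\tau G_{\lambda\nu_2\ldots\nu_{2N}}q^{\nu_2}_\tau\cdots q^{\nu_{2N}}_\tau G^{-1}]G^{1/2N-1}$. *)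

theory Defs
  imports "HOL-Analysis.Analysis" "HOL-Library.Multiset"
begin

text \<open>Everything is expressed in one coordinate chart: the chart domain of Q is an
open set U of real^'m (coordinates q^lambda), jet coordinates are
(tau, q, v = q_tau, a = q_tau_tau).\<close>

definition pd :: "'m::finite \<Rightarrow> (real^'m \<Rightarrow> real) \<Rightarrow> real^'m \<Rightarrow> real" where
  "pd \<beta> f q = deriv (\<lambda>t. f (q + t *\<^sub>R axis \<beta> 1)) 0"

definition iterpd :: "'m::finite list \<Rightarrow> (real^'m \<Rightarrow> real) \<Rightarrow> real^'m \<Rightarrow> real" where
  "iterpd \<beta>s f = fold pd \<beta>s f"

definition smooth_on :: "(real^'m::finite) set \<Rightarrow> (real^'m \<Rightarrow> real) \<Rightarrow> bool" where
  "smooth_on U f \<longleftrightarrow> (\<forall>\<beta>s. continuous_on U (iterpd \<beta>s f) \<and>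
     (\<forall>\<beta>. \<forall>q\<in>U. ((\<lambda>t. iterpd \<beta>s f (q + t *\<^sub>R axis \<beta> 1))
         has_real_derivative iterpd (\<beta>s @ [\<beta>]) f q) (at 0)))"

definition smooth_curve :: "real set \<Rightarrow> (real \<Rightarrow> real^'m::finite) \<Rightarrow> bool" where
  "smooth_curve T s \<longleftrightarrow> (\<forall>i k. \<forall>\<tau>\<in>T.
     (((deriv ^^ k) (\<lambda>t. s t $ i)) has_real_derivative
        (deriv ^^ Suc k) (\<lambda>t. s t $ i) \<tau>) (at \<tau>))"

definition vel :: "(real \<Rightarrow> real^'m::finite) \<Rightarrow> real \<Rightarrow> real^'m" where
  "vel s \<tau> = (\<chi> i. deriv (\<lambda>t. s t $ i) \<tau>)"

definition acc :: "(real \<Rightarrow> real^'m::finite) \<Rightarrow> real \<Rightarrow> real^'m" where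
  "acc s \<tau> = (\<chi> i. (deriv ^^ 2) (\<lambda>t. s t $ i) \<tau>)"

definition vmon :: "real^'m::finite \<Rightarrow> 'm list \<Rightarrow> real" where
  "vmon v \<alpha>s = prod_list (map (\<lambda>a. v $ a) \<alpha>s)"

definition idx :: "nat \<Rightarrow> 'm::finite list set" where
  "idx k = {\<alpha>s. length \<alpha>s = k}"

definition Gform :: "('m::finite list \<Rightarrow> real^'m \<Rightarrow> real) \<Rightarrow> nat \<Rightarrow> real^'m \<Rightarrow> real^'m \<Rightarrow> real" where
  "Gform G N q v = (\<Sum>\<alpha>s\<in>idx (2*N). G \<alpha>s q * vmon v \<alpha>s)"

definition symmetric_tensor :: "nat \<Rightarrow> ('m::finite list \<Rightarrow> real^'m \<Rightarrow> real) \<Rightarrow> bool" where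
  "symmetric_tensor k G \<longleftrightarrow> (\<forall>\<alpha>s \<gamma>s. length \<alpha>s = k \<longrightarrow> mset \<alpha>s = mset \<gamma>s \<longrightarrow> G \<alpha>s = G \<gamma>s)"

definition Lag :: "('m::finite list \<Rightarrow> real^'m \<Rightarrow> real) \<Rightarrow> ('m \<Rightarrow> real^'m \<Rightarrow> real) \<Rightarrow> nat
     \<Rightarrow> real^'m \<Rightarrow> real^'m \<Rightarrow> real" where
  "Lag G A N q v = Gform G N q v powr (1 / real (2*N)) + (\<Sum>\<mu>\<in>UNIV. v $ \<mu> * A \<mu> q)"

definition EL :: "('m::finite list \<Rightarrow> real^'m \<Rightarrow> real) \<Rightarrow> ('m \<Rightarrow> real^'m \<Rightarrow> real) \<Rightarrow> nat
     \<Rightarrow> (real \<Rightarrow> real^'m) \<Rightarrow> 'm \<Rightarrow> real \<Rightarrow> real" where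
  "EL G A N s l \<tau> =
     pd l (\<lambda>q. Lag G A N q (vel s \<tau>)) (s \<tau>)
     - deriv (\<lambda>t. pd l (\<lambda>v. Lag G A N (s t) v) (vel s t)) \<tau>"

definition Fld :: "('m::finite \<Rightarrow> real^'m \<Rightarrow> real) \<Rightarrow> 'm \<Rightarrow> 'm \<Rightarrow> real^'m \<Rightarrow> real" where
  "Fld A l \<mu> q = pd l (A \<mu>) q - pd \<mu> (A l) q"

definition Eexpr :: "('m::finite list \<Rightarrow> real^'m \<Rightarrow> real) \<Rightarrow> ('m \<Rightarrow> real^'m \<Rightarrow> real) \<Rightarrow> nat
     \<Rightarrow> 'm \<Rightarrow> real^'m \<Rightarrow> real^'m \<Rightarrow> real^'m \<Rightarrow> real" where
  "Eexpr G A N \<beta> q v a =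
     (\<Sum>\<mu>\<in>UNIV. \<Sum>\<alpha>s\<in>idx (2*N - 1).
        (1 / real (2*N) * pd \<beta> (G (\<mu> # \<alpha>s)) q - pd \<mu> (G (\<beta> # \<alpha>s)) q) * v $ \<mu> * vmon v \<alpha>s)
   - real (2*N - 1) * (\<Sum>\<mu>\<in>UNIV. \<Sum>\<alpha>s\<in>idx (2*N - 2). G (\<beta> # \<mu> # \<alpha>s) q * a $ \<mu> * vmon v \<alpha>s)
   + Gform G N q v powr (1 - 1 / real (2*N)) * (\<Sum>\<mu>\<in>UNIV. Fld A \<beta> \<mu> q * v $ \<mu>)"

end

theory Submission
  imports Defs
begin

text \<open>On a curve with \<open>G = 1\<close> the powers of \<open>G\<close> drop out of the Euler--Lagrange expression.
  The position derivative of \<open>G^(1/2N)\<close> is \<open>\<partial>\<^sub>\<lambda>G / 2N\<close>; and since \<open>G = 1\<close> on the whole open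
  parameter set, the momentum \<open>\<partial>\<^sup>\<tau>\<^sub>\<lambda>\<L>\<close> may be replaced by \<open>G\<^sub>\<lambda>\<^sub>\<alpha>\<^sub>\<dots> q\<^sup>\<alpha>\<^sub>\<tau>\<cdots> + A\<^sub>\<lambda>\<close> before
  it is differentiated in \<open>\<tau>\<close>. By the symmetry of \<open>G\<close>, all \<open>2N - 1\<close> terms that the product rule
  produces from the velocity factors are equal, and \<open>\<E>\<^sub>\<lambda>\<close> coincides term by term with \<open>E\<^sub>\<lambda>\<close>.\<close>

lemma DERIV_increment_bound:
  fixes g :: "real \<Rightarrow> real"
  assumes g': "\<And>t. \<bar>t\<bar> \<le> \<bar>r\<bar> \<Longrightarrow> (g has_real_derivative g' t) (at t)"
    and bound: "\<And>t. \<bar>t\<bar> \<le> \<bar>r\<bar> \<Longrightarrow> \<bar>g' t - c\<bar> \<le> e"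
  shows "\<bar>g r - g 0 - r * c\<bar> \<le> e * \<bar>r\<bar>"
proof -
  have "norm ((g r - r * c) - (g 0 - 0 * c)) \<le> e * norm (r - 0)"
  proof (rule field_differentiable_bound[where S = "{-\<bar>r\<bar>..\<bar>r\<bar>}" and f' = "\<lambda>t. g' t - c"])
    fix t assume "t \<in> {-\<bar>r\<bar>..\<bar>r\<bar>}"
    then have t: "\<bar>t\<bar> \<le> \<bar>r\<bar>" by auto
    have "((\<lambda>t. g t - t * c) has_real_derivative g' t - c) (at t)"
      using g'[OF t] by (auto intro!: derivative_eq_intros)
    then show "((\<lambda>t. g t - t * c) has_real_derivative g' t - c) (at t within {-\<bar>r\<bar>..\<bar>r\<bar>})"
      by (rule has_field_derivative_at_within)
    show "norm (g' t - c) \<le> e" using bound[OF t] by simp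
  qed auto
  then show ?thesis by simp
qed

text \<open>Changing the coordinates in \<open>F\<close> one at a time, each step is controlled by the mean value
  bound for a single partial derivative.\<close>
lemma increment_bound_by_partials:
  fixes f :: "real^'m::finite \<Rightarrow> real"
  assumes partial: "\<And>\<beta> x. norm (x - q) < d \<Longrightarrow>
      ((\<lambda>t. f (x + t *\<^sub>R axis \<beta> 1)) has_real_derivative D \<beta> x) (at 0)"
    and close: "\<And>\<beta> x. norm (x - q) < d \<Longrightarrow> \<bar>D \<beta> x - D \<beta> q\<bar> \<le> e"
  shows "(\<forall>\<beta>. \<beta> \<notin> F \<longrightarrow> h $ \<beta> = 0) \<Longrightarrow> norm h < d \<Longrightarrow>
      \<bar>f (q + h) - f q - (\<Sum>\<beta>\<in>F. h $ \<beta> * D \<beta> q)\<bar> \<le> e * (\<Sum>\<beta>\<in>F. \<bar>h $ \<beta>\<bar>)"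
proof (induction F arbitrary: h rule: finite_induct[OF finite])
  case 1
  then have "h = 0" by (simp add: vec_eq_iff)
  then show ?case by simp
next
  case (2 b F)
  define h' where "h' = h - (h $ b) *\<^sub>R axis b 1"
  have h'_nth: "h' $ \<beta> = (if \<beta> = b then 0 else h $ \<beta>)" for \<beta>
    by (simp add: h'_def axis_def)
  have segment_norm: "norm (h' + t *\<^sub>R axis b 1) < d" if "\<bar>t\<bar> \<le> \<bar>h $ b\<bar>" for t
  proof -
    have "norm (h' + t *\<^sub>R axis b 1) \<le> norm h"
      by (rule norm_le_componentwise_cart) (use that in \<open>auto simp: h'_nth axis_def\<close>)
    then show ?thesis using "2.prems"(2) by simp
  qed
  have IH: "\<bar>f (q + h') - f q - (\<Sum>\<beta>\<in>F. h $ \<beta> * D \<beta> q)\<bar> \<le> e * (\<Sum>\<beta>\<in>F. \<bar>h $ \<beta>\<bar>)"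
  proof -
    have "(\<Sum>\<beta>\<in>F. h' $ \<beta> * D \<beta> q) = (\<Sum>\<beta>\<in>F. h $ \<beta> * D \<beta> q)"
      "(\<Sum>\<beta>\<in>F. \<bar>h' $ \<beta>\<bar>) = (\<Sum>\<beta>\<in>F. \<bar>h $ \<beta>\<bar>)"
      using "2.hyps"(2) h'_nth by (auto intro: sum.cong)
    moreover have "\<forall>\<beta>. \<beta> \<notin> F \<longrightarrow> h' $ \<beta> = 0" using "2.prems"(1) h'_nth by auto
    ultimately show ?thesis using "2.IH"[of h'] segment_norm[of 0] by simp
  qed
  define g where "g t = f (q + h' + t *\<^sub>R axis b 1)" for t
  have last_coordinate: "\<bar>g (h $ b) - g 0 - h $ b * D b q\<bar> \<le> e * \<bar>h $ b\<bar>"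
    unfolding g_def
  proof (rule DERIV_increment_bound)
    fix t assume t: "\<bar>t\<bar> \<le> \<bar>h $ b\<bar>"
    have x: "norm ((q + h' + t *\<^sub>R axis b 1) - q) < d" using segment_norm[OF t] by simp
    have "(\<lambda>u. f (q + h' + t *\<^sub>R axis b 1 + u *\<^sub>R axis b 1))
        = (\<lambda>u. f (q + h' + (u + t) *\<^sub>R axis b 1))"
      by (simp add: scaleR_add_left algebra_simps)
    then have "((\<lambda>u. f (q + h' + (u + t) *\<^sub>R axis b 1)) has_real_derivative
        D b (q + h' + t *\<^sub>R axis b 1)) (at 0)"
      using partial[of _ b, OF x] by simp
    then show "((\<lambda>t. f (q + h' + t *\<^sub>R axis b 1)) has_real_derivative
        D b (q + h' + t *\<^sub>R axis b 1)) (at t)"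
      using DERIV_shift[of _ _ 0 t] by simp
    show "\<bar>D b (q + h' + t *\<^sub>R axis b 1) - D b q\<bar> \<le> e" using close[OF x] .
  qed
  have "g (h $ b) = f (q + h)" "g 0 = f (q + h')" by (simp_all add: g_def h'_def)
  then show ?case using IH last_coordinate "2.hyps"
    by (simp add: distrib_left)
qed

lemma has_derivative_of_continuous_partials:
  fixes f :: "real^'m::finite \<Rightarrow> real"
  assumes "open U" "q \<in> U"
    and partial: "\<And>\<beta> x. x \<in> U \<Longrightarrow>
      ((\<lambda>t. f (x + t *\<^sub>R axis \<beta> 1)) has_real_derivative D \<beta> x) (at 0)"
    and cont: "\<And>\<beta>. continuous_on U (D \<beta>)"
  shows "(f has_derivative (\<lambda>h. \<Sum>\<beta>\<in>UNIV. h $ \<beta> * D \<beta> q)) (at q)"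
  unfolding has_derivative_at_alt
proof (intro conjI allI impI)
  show "bounded_linear (\<lambda>h. \<Sum>\<beta>\<in>UNIV. h $ \<beta> * D \<beta> q)"
    by (intro bounded_linear_sum bounded_linear_compose[OF bounded_linear_mult_left bounded_linear_vec_nth])
  fix e :: real assume "e > 0"
  define K where "K = real CARD('m)"
  have "K > 0" by (simp add: K_def)
  with \<open>e > 0\<close> have "e / K > 0" by simp
  obtain d0 where "d0 > 0" "ball q d0 \<subseteq> U" using assms(1,2) open_contains_ball by blast
  have "\<forall>\<beta>. \<exists>d>0. \<forall>x\<in>U. dist x q < d \<longrightarrow> dist (D \<beta> x) (D \<beta> q) < e / K"
    using cont assms(2) \<open>e / K > 0\<close> unfolding continuous_on_iff by blast
  then obtain dd where dd: "\<And>\<beta>. dd \<beta> > 0"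
    "\<And>\<beta> x. x \<in> U \<Longrightarrow> dist x q < dd \<beta> \<Longrightarrow> dist (D \<beta> x) (D \<beta> q) < e / K"
    by metis
  define d where "d = Min (insert d0 (range dd))"
  have "d > 0" unfolding d_def using \<open>d0 > 0\<close> dd(1) by (auto simp: Min_gr_iff)
  have near_U: "x \<in> U" and near_close: "\<bar>D \<beta> x - D \<beta> q\<bar> \<le> e / K" if "norm (x - q) < d" for x \<beta>
  proof -
    have "d \<le> d0" "d \<le> dd \<beta>" unfolding d_def by (rule Min_le; simp)+
    then show "x \<in> U" using that \<open>ball q d0 \<subseteq> U\<close> by (auto simp: dist_norm norm_minus_commute)
    then show "\<bar>D \<beta> x - D \<beta> q\<bar> \<le> e / K"
      using dd(2)[of x \<beta>] that \<open>d \<le> dd \<beta>\<close> by (simp add: dist_norm)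
  qed
  show "\<exists>d>0. \<forall>y. norm (y - q) < d \<longrightarrow>
      norm (f y - f q - (\<Sum>\<beta>\<in>UNIV. (y - q) $ \<beta> * D \<beta> q)) \<le> e * norm (y - q)"
  proof (intro exI[of _ d] conjI allI impI)
    fix y assume y: "norm (y - q) < d"
    define h where "h = y - q"
    have "\<bar>f (q + h) - f q - (\<Sum>\<beta>\<in>UNIV. h $ \<beta> * D \<beta> q)\<bar> \<le> e / K * (\<Sum>\<beta>\<in>UNIV. \<bar>h $ \<beta>\<bar>)"
      by (rule increment_bound_by_partials[where d = d])
        (use partial near_U near_close y in \<open>auto simp: h_def\<close>)
    also have "\<dots> \<le> e / K * (\<Sum>\<beta>\<in>(UNIV::'m set). norm h)"
      using \<open>e / K > 0\<close> by (intro mult_left_mono sum_mono component_le_norm_cart) auto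
    also have "\<dots> = e * norm h" using \<open>K > 0\<close> by (simp add: K_def)
    finally show "norm (f y - f q - (\<Sum>\<beta>\<in>UNIV. (y - q) $ \<beta> * D \<beta> q)) \<le> e * norm (y - q)"
      by (simp add: h_def)
  qed (rule \<open>d > 0\<close>)
qed

lemma vector_curve_has_derivative:
  fixes c :: "real \<Rightarrow> real^'m::finite"
  assumes "\<And>i. ((\<lambda>t. c t $ i) has_real_derivative c' $ i) (at \<tau>)"
  shows "(c has_derivative (\<lambda>h. h *\<^sub>R c')) (at \<tau>)"
proof -
  have "((\<lambda>t. c t \<bullet> i) has_derivative (\<lambda>h. (h *\<^sub>R c') \<bullet> i)) (at \<tau>)" if "i \<in> Basis" for i
  proof -
    obtain j where j: "i = axis j 1" using \<open>i \<in> Basis\<close> by (auto simp: Basis_vec_def)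
    have "(\<lambda>h. h * c' $ j) = (*) (c' $ j)" by (auto simp: mult.commute)
    then show ?thesis using assms[of j] unfolding j has_field_derivative_def
      by (simp add: inner_axis)
  qed
  then show ?thesis using has_derivative_componentwise_within[of c _ \<tau> UNIV] by simp
qed

lemma smooth_on_has_pd:
  assumes "smooth_on U f" "q \<in> U"
  shows "((\<lambda>t. f (q + t *\<^sub>R axis \<beta> 1)) has_real_derivative pd \<beta> f q) (at 0)"
proof -
  have "((\<lambda>t. iterpd [] f (q + t *\<^sub>R axis \<beta> 1)) has_real_derivative iterpd ([] @ [\<beta>]) f q) (at 0)"
    using assms unfolding smooth_on_def by blast
  then show ?thesis by (simp add: iterpd_def)
qed

lemma smooth_on_continuous_on_pd:
  assumes "smooth_on U f"
  shows "continuous_on U (pd \<beta> f)"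
proof -
  have "continuous_on U (iterpd [\<beta>] f)" using assms unfolding smooth_on_def by blast
  then show ?thesis by (simp add: iterpd_def)
qed

lemma smooth_on_chain_rule:
  fixes f :: "real^'m::finite \<Rightarrow> real"
  assumes "open U" "smooth_on U f" "c \<tau> \<in> U"
    and "\<And>i. ((\<lambda>t. c t $ i) has_real_derivative c' $ i) (at \<tau>)"
  shows "((\<lambda>t. f (c t)) has_real_derivative (\<Sum>\<mu>\<in>UNIV. pd \<mu> f (c \<tau>) * c' $ \<mu>)) (at \<tau>)"
proof -
  have "(f has_derivative (\<lambda>h. \<Sum>\<mu>\<in>UNIV. h $ \<mu> * pd \<mu> f (c \<tau>))) (at (c \<tau>))"
    by (rule has_derivative_of_continuous_partials[OF assms(1,3)])
      (use smooth_on_has_pd[OF assms(2)] smooth_on_continuous_on_pd[OF assms(2)] in auto)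
  from diff_chain_at[OF vector_curve_has_derivative[OF assms(4)] this]
  have "((\<lambda>t. f (c t)) has_derivative (\<lambda>h. \<Sum>\<mu>\<in>UNIV. (h *\<^sub>R c') $ \<mu> * pd \<mu> f (c \<tau>))) (at \<tau>)"
    by (simp add: o_def)
  moreover have "(\<lambda>h. \<Sum>\<mu>\<in>UNIV. (h *\<^sub>R c') $ \<mu> * pd \<mu> f (c \<tau>))
      = (*) (\<Sum>\<mu>\<in>UNIV. pd \<mu> f (c \<tau>) * c' $ \<mu>)"
    by (auto simp: sum_distrib_left mult_ac intro!: ext sum.cong)
  ultimately show ?thesis unfolding has_field_derivative_def by simp
qed

lemma smooth_curve_has_vel:
  assumes "smooth_curve T s" "\<tau> \<in> T"
  shows "((\<lambda>t. s t $ i) has_real_derivative vel s \<tau> $ i) (at \<tau>)"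
proof -
  have "(((deriv ^^ 0) (\<lambda>t. s t $ i)) has_real_derivative (deriv ^^ Suc 0) (\<lambda>t. s t $ i) \<tau>) (at \<tau>)"
    using assms unfolding smooth_curve_def by blast
  then show ?thesis by (simp add: vel_def)
qed

lemma smooth_curve_has_acc:
  assumes "smooth_curve T s" "\<tau> \<in> T"
  shows "((\<lambda>t. vel s t $ i) has_real_derivative acc s \<tau> $ i) (at \<tau>)"
proof -
  have "(\<lambda>t. vel s t $ i) = (deriv ^^ 1) (\<lambda>t. s t $ i)" by (simp add: vel_def fun_eq_iff)
  moreover have "acc s \<tau> $ i = (deriv ^^ Suc 1) (\<lambda>t. s t $ i) \<tau>"
    by (simp add: acc_def numeral_2_eq_2)
  moreover have "(((deriv ^^ 1) (\<lambda>t. s t $ i)) has_real_derivative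
      (deriv ^^ Suc 1) (\<lambda>t. s t $ i) \<tau>) (at \<tau>)"
    using assms unfolding smooth_curve_def by blast
  ultimately show ?thesis by simp
qed

lemma vmon_Nil [simp]: "vmon w [] = 1"
  by (simp add: vmon_def)

lemma vmon_Cons [simp]: "vmon w (a # as) = w $ a * vmon w as"
  by (simp add: vmon_def)

text \<open>The differential of \<open>w \<mapsto> vmon w as\<close> at \<open>w\<close>, applied to \<open>w'\<close>.\<close>
fun vmon_diff :: "real^'m::finite \<Rightarrow> real^'m \<Rightarrow> 'm list \<Rightarrow> real" where
  "vmon_diff w w' [] = 0"
| "vmon_diff w w' (a # as) = w' $ a * vmon w as + w $ a * vmon_diff w w' as"

lemma has_real_derivative_vmon:
  fixes c :: "real \<Rightarrow> real^'m::finite"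
  assumes "\<And>i. ((\<lambda>t. c t $ i) has_real_derivative c' $ i) (at \<tau>)"
  shows "((\<lambda>t. vmon (c t) as) has_real_derivative vmon_diff (c \<tau>) c' as) (at \<tau>)"
proof (induction as)
  case (Cons a as)
  show ?case using DERIV_mult[OF assms[of a] Cons] by (simp add: algebra_simps)
qed simp

lemma finite_idx [simp]: "finite (idx n :: 'm::finite list set)"
  using finite_lists_length_eq[of "UNIV :: 'm set" n] by (simp add: idx_def)

lemma idx_Suc: "idx (Suc n) = (\<lambda>(a, as). a # as) ` (UNIV \<times> idx n)"
  by (auto simp: idx_def image_iff length_Suc_conv)

lemma sum_idx_Suc:
  "(\<Sum>\<alpha>s\<in>idx (Suc n). g \<alpha>s) = (\<Sum>a\<in>(UNIV::'m::finite set). \<Sum>\<alpha>s\<in>idx n. g (a # \<alpha>s))"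
proof -
  have "inj_on (\<lambda>(a, as). a # as) (UNIV \<times> (idx n :: 'm list set))"
    by (auto simp: inj_on_def)
  then have "(\<Sum>\<alpha>s\<in>idx (Suc n). g \<alpha>s) = (\<Sum>p\<in>UNIV \<times> idx n. g (fst p # snd p))"
    unfolding idx_Suc by (subst sum.reindex) (auto simp: case_prod_beta intro!: sum.cong)
  then show ?thesis by (simp add: sum.cartesian_product case_prod_beta)
qed

definition symmetric_coeffs :: "nat \<Rightarrow> ('m list \<Rightarrow> real) \<Rightarrow> bool" where
  "symmetric_coeffs k c \<longleftrightarrow> (\<forall>\<alpha>s \<gamma>s. length \<alpha>s = k \<longrightarrow> mset \<alpha>s = mset \<gamma>s \<longrightarrow> c \<alpha>s = c \<gamma>s)"

lemma symmetric_tensor_imp_symmetric_coeffs: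
  "symmetric_tensor k G \<Longrightarrow> symmetric_coeffs k (\<lambda>\<alpha>s. G \<alpha>s q)"
  unfolding symmetric_tensor_def symmetric_coeffs_def by simp

lemma symmetric_coeffs_Cons:
  "symmetric_coeffs (Suc k) c \<Longrightarrow> symmetric_coeffs k (\<lambda>\<alpha>s. c (a # \<alpha>s))"
  unfolding symmetric_coeffs_def by (metis length_Cons mset.simps(2))

lemma symmetric_coeffs_swap:
  "symmetric_coeffs (Suc (Suc k)) c \<Longrightarrow> length \<alpha>s = k \<Longrightarrow> c (a # b # \<alpha>s) = c (b # a # \<alpha>s)"
  unfolding symmetric_coeffs_def by (simp add: add_mset_commute)

text \<open>By symmetry, the \<open>n + 1\<close> terms of the product rule are equal.\<close>
lemma sum_symmetric_coeffs_vmon_diff: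
  fixes c :: "'m::finite list \<Rightarrow> real"
  assumes "symmetric_coeffs (Suc n) c"
  shows "(\<Sum>\<alpha>s\<in>idx (Suc n). c \<alpha>s * vmon_diff w w' \<alpha>s)
       = real (Suc n) * (\<Sum>\<mu>\<in>UNIV. \<Sum>\<alpha>s\<in>idx n. c (\<mu> # \<alpha>s) * w' $ \<mu> * vmon w \<alpha>s)"
  using assms
proof (induction n arbitrary: c)
  case 0
  have idx_0: "idx 0 = {[]}" by (auto simp: idx_def)
  show ?case by (simp add: sum_idx_Suc idx_0)
next
  case (Suc m)
  define X where "X = (\<Sum>\<mu>\<in>UNIV. \<Sum>\<alpha>s\<in>idx (Suc m). c (\<mu> # \<alpha>s) * w' $ \<mu> * vmon w \<alpha>s)"
  have "(\<Sum>\<alpha>s\<in>idx (Suc (Suc m)). c \<alpha>s * vmon_diff w w' \<alpha>s)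
      = X + (\<Sum>a\<in>UNIV. w $ a * (\<Sum>\<alpha>s\<in>idx (Suc m). c (a # \<alpha>s) * vmon_diff w w' \<alpha>s))"
    unfolding X_def sum_idx_Suc[where n = "Suc m"]
    by (simp add: distrib_left sum.distrib sum_distrib_left mult_ac)
  also have "\<dots> = X + real (Suc m) *
      (\<Sum>a\<in>UNIV. \<Sum>\<mu>\<in>UNIV. \<Sum>\<alpha>s\<in>idx m. c (a # \<mu> # \<alpha>s) * w' $ \<mu> * vmon w (a # \<alpha>s))"
    using Suc.IH[OF symmetric_coeffs_Cons[OF Suc.prems]]
    by (simp add: sum_distrib_left mult_ac)
  also have "\<dots> = X + real (Suc m) *
      (\<Sum>\<mu>\<in>UNIV. \<Sum>a\<in>UNIV. \<Sum>\<alpha>s\<in>idx m. c (\<mu> # a # \<alpha>s) * w' $ \<mu> * vmon w (a # \<alpha>s))"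
    using symmetric_coeffs_swap[OF Suc.prems]
    by (subst sum.swap) (simp add: idx_def)
  also have "\<dots> = real (Suc (Suc m)) * X"
    unfolding X_def by (simp add: sum_idx_Suc[where n = m] algebra_simps)
  finally show ?case unfolding X_def .
qed

lemma sum_mult_axis: "(\<Sum>\<mu>\<in>UNIV. F \<mu> * (axis l 1 :: real^'m::finite) $ \<mu>) = F l"
  by (simp add: axis_def if_distrib cong: if_cong)

lemma pd_Lag_position:
  fixes G :: "'m::finite list \<Rightarrow> real^'m \<Rightarrow> real"
  assumes "\<forall>\<alpha>s. smooth_on U (G \<alpha>s)" "\<forall>\<mu>. smooth_on U (A \<mu>)" "q \<in> U"
    and "Gform G N q v = 1"
  shows "pd l (\<lambda>q. Lag G A N q v) q =
     1 / real (2*N) * (\<Sum>\<alpha>s\<in>idx (2*N). pd l (G \<alpha>s) q * vmon v \<alpha>s)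
     + (\<Sum>\<mu>\<in>UNIV. v $ \<mu> * pd l (A \<mu>) q)"
proof -
  have "((\<lambda>t. Gform G N (q + t *\<^sub>R axis l 1) v) has_real_derivative
      (\<Sum>\<alpha>s\<in>idx (2*N). pd l (G \<alpha>s) q * vmon v \<alpha>s)) (at 0)"
    unfolding Gform_def
    by (intro DERIV_sum DERIV_cmult_right smooth_on_has_pd[OF _ assms(3)]) (use assms(1) in auto)
  from DERIV_fun_powr[OF this, of "1 / real (2*N)"]
  have "((\<lambda>t. Gform G N (q + t *\<^sub>R axis l 1) v powr (1 / real (2*N))) has_real_derivative
      1 / real (2*N) * (\<Sum>\<alpha>s\<in>idx (2*N). pd l (G \<alpha>s) q * vmon v \<alpha>s)) (at 0)"
    using assms(4) by simp
  moreover have "((\<lambda>t. \<Sum>\<mu>\<in>UNIV. v $ \<mu> * A \<mu> (q + t *\<^sub>R axis l 1)) has_real_derivative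
      (\<Sum>\<mu>\<in>UNIV. v $ \<mu> * pd l (A \<mu>) q)) (at 0)"
    by (intro DERIV_sum DERIV_cmult smooth_on_has_pd[OF _ assms(3)]) (use assms(2) in auto)
  ultimately show ?thesis
    unfolding pd_def Lag_def by (intro DERIV_imp_deriv DERIV_add)
qed

lemma has_real_derivative_Gform_along_axis:
  fixes G :: "'m::finite list \<Rightarrow> real^'m \<Rightarrow> real"
  assumes "symmetric_tensor (2*N) G" "N \<ge> 1"
  shows "((\<lambda>u. Gform G N q (w + u *\<^sub>R axis l 1)) has_real_derivative
      real (2*N) * (\<Sum>\<alpha>s\<in>idx (2*N - 1). G (l # \<alpha>s) q * vmon w \<alpha>s)) (at 0)"
proof -
  define e :: "real^'m" where "e = axis l 1"
  have "2*N = Suc (2*N - 1)" using assms(2) by simp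
  have "(\<Sum>\<alpha>s\<in>idx (2*N). G \<alpha>s q * vmon_diff w e \<alpha>s)
      = real (2*N) * (\<Sum>\<mu>\<in>UNIV. \<Sum>\<alpha>s\<in>idx (2*N - 1). G (\<mu> # \<alpha>s) q * e $ \<mu> * vmon w \<alpha>s)"
    using sum_symmetric_coeffs_vmon_diff[of "2*N - 1" "\<lambda>\<alpha>s. G \<alpha>s q" w e]
      symmetric_tensor_imp_symmetric_coeffs[OF assms(1)] \<open>2*N = Suc (2*N - 1)\<close>
    by (metis of_nat_Suc)
  also have "(\<Sum>\<mu>\<in>UNIV. \<Sum>\<alpha>s\<in>idx (2*N - 1). G (\<mu> # \<alpha>s) q * e $ \<mu> * vmon w \<alpha>s)
      = (\<Sum>\<mu>\<in>UNIV. (\<Sum>\<alpha>s\<in>idx (2*N - 1). G (\<mu> # \<alpha>s) q * vmon w \<alpha>s) * e $ \<mu>)"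
    by (simp add: sum_distrib_left sum_distrib_right mult_ac)
  also have "\<dots> = (\<Sum>\<alpha>s\<in>idx (2*N - 1). G (l # \<alpha>s) q * vmon w \<alpha>s)"
    unfolding e_def by (rule sum_mult_axis)
  finally have euler: "(\<Sum>\<alpha>s\<in>idx (2*N). G \<alpha>s q * vmon_diff w e \<alpha>s)
      = real (2*N) * (\<Sum>\<alpha>s\<in>idx (2*N - 1). G (l # \<alpha>s) q * vmon w \<alpha>s)" .
  have "((\<lambda>u. (w + u *\<^sub>R e) $ i) has_real_derivative e $ i) (at 0)" for i
    by (auto intro!: derivative_eq_intros)
  from has_real_derivative_vmon[of "\<lambda>u. w + u *\<^sub>R e" e 0, OF this] show ?thesis
    unfolding Gform_def euler[symmetric] e_def[symmetric] by (intro DERIV_sum DERIV_cmult) simp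
qed

lemma pd_Lag_velocity:
  fixes G :: "'m::finite list \<Rightarrow> real^'m \<Rightarrow> real"
  assumes "symmetric_tensor (2*N) G" "Gform G N q w = 1" "N \<ge> 1"
  shows "pd l (\<lambda>w. Lag G A N q w) w = (\<Sum>\<alpha>s\<in>idx (2*N - 1). G (l # \<alpha>s) q * vmon w \<alpha>s) + A l q"
proof -
  from DERIV_fun_powr[OF has_real_derivative_Gform_along_axis[OF assms(1,3), of q w l],
      where r = "1 / real (2*N)"]
  have "((\<lambda>u. Gform G N q (w + u *\<^sub>R axis l 1) powr (1 / real (2*N))) has_real_derivative
      (\<Sum>\<alpha>s\<in>idx (2*N - 1). G (l # \<alpha>s) q * vmon w \<alpha>s)) (at 0)"
    using assms(2,3) by simp
  moreover have "((\<lambda>u. \<Sum>\<mu>\<in>UNIV. (w + u *\<^sub>R axis l 1) $ \<mu> * A \<mu> q) has_real_derivative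
      (\<Sum>\<mu>\<in>UNIV. A \<mu> q * axis l 1 $ \<mu>)) (at 0)"
    by (intro DERIV_sum) (auto intro!: derivative_eq_intros)
  then have "((\<lambda>u. \<Sum>\<mu>\<in>UNIV. (w + u *\<^sub>R axis l 1) $ \<mu> * A \<mu> q) has_real_derivative A l q) (at 0)"
    unfolding sum_mult_axis .
  ultimately show ?thesis
    unfolding pd_def Lag_def by (intro DERIV_imp_deriv DERIV_add)
qed

lemma has_real_derivative_contraction_along_curve:
  fixes G :: "'m::finite list \<Rightarrow> real^'m \<Rightarrow> real" and s :: "real \<Rightarrow> real^'m"
  assumes "open U" "\<forall>\<alpha>s. smooth_on U (G \<alpha>s)" "symmetric_tensor (Suc (Suc k)) G"
    and "smooth_curve T s" "\<tau> \<in> T" "s \<tau> \<in> U"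
  shows "((\<lambda>t. \<Sum>\<alpha>s\<in>idx (Suc k). G (l # \<alpha>s) (s t) * vmon (vel s t) \<alpha>s) has_real_derivative
      (\<Sum>\<mu>\<in>UNIV. \<Sum>\<alpha>s\<in>idx (Suc k). pd \<mu> (G (l # \<alpha>s)) (s \<tau>) * vel s \<tau> $ \<mu> * vmon (vel s \<tau>) \<alpha>s)
      + real (Suc k) *
        (\<Sum>\<mu>\<in>UNIV. \<Sum>\<alpha>s\<in>idx k. G (l # \<mu> # \<alpha>s) (s \<tau>) * acc s \<tau> $ \<mu> * vmon (vel s \<tau>) \<alpha>s))
      (at \<tau>)"
proof -
  define q v a where "q = s \<tau>" and "v = vel s \<tau>" and "a = acc s \<tau>"
  have vel: "\<And>i. ((\<lambda>t. s t $ i) has_real_derivative v $ i) (at \<tau>)"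
    and acc: "\<And>i. ((\<lambda>t. vel s t $ i) has_real_derivative a $ i) (at \<tau>)"
    using smooth_curve_has_vel[OF assms(4,5)] smooth_curve_has_acc[OF assms(4,5)]
    by (simp_all add: v_def a_def)
  have "((\<lambda>t. \<Sum>\<alpha>s\<in>idx (Suc k). G (l # \<alpha>s) (s t) * vmon (vel s t) \<alpha>s) has_real_derivative
      (\<Sum>\<alpha>s\<in>idx (Suc k). (\<Sum>\<mu>\<in>UNIV. pd \<mu> (G (l # \<alpha>s)) q * v $ \<mu>) * vmon v \<alpha>s
        + G (l # \<alpha>s) q * vmon_diff v a \<alpha>s)) (at \<tau>)"
  proof (rule DERIV_sum)
    fix \<alpha>s
    have "((\<lambda>t. G (l # \<alpha>s) (s t)) has_real_derivative (\<Sum>\<mu>\<in>UNIV. pd \<mu> (G (l # \<alpha>s)) q * v $ \<mu>))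
        (at \<tau>)"
      using smooth_on_chain_rule[OF assms(1) _ assms(6) vel] assms(2) by (simp add: q_def)
    from DERIV_mult[OF this has_real_derivative_vmon[OF acc]]
    show "((\<lambda>t. G (l # \<alpha>s) (s t) * vmon (vel s t) \<alpha>s) has_real_derivative
        (\<Sum>\<mu>\<in>UNIV. pd \<mu> (G (l # \<alpha>s)) q * v $ \<mu>) * vmon v \<alpha>s + G (l # \<alpha>s) q * vmon_diff v a \<alpha>s)
        (at \<tau>)"
      by (simp add: q_def v_def mult.commute)
  qed
  moreover have "(\<Sum>\<alpha>s\<in>idx (Suc k). (\<Sum>\<mu>\<in>UNIV. pd \<mu> (G (l # \<alpha>s)) q * v $ \<mu>) * vmon v \<alpha>s)
      = (\<Sum>\<mu>\<in>UNIV. \<Sum>\<alpha>s\<in>idx (Suc k). pd \<mu> (G (l # \<alpha>s)) q * v $ \<mu> * vmon v \<alpha>s)"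
    by (subst sum.swap) (simp add: sum_distrib_right)
  moreover have "symmetric_coeffs (Suc k) (\<lambda>\<alpha>s. G (l # \<alpha>s) q)"
    using symmetric_coeffs_Cons symmetric_tensor_imp_symmetric_coeffs[OF assms(3)] .
  then have "(\<Sum>\<alpha>s\<in>idx (Suc k). G (l # \<alpha>s) q * vmon_diff v a \<alpha>s)
      = real (Suc k) * (\<Sum>\<mu>\<in>UNIV. \<Sum>\<alpha>s\<in>idx k. G (l # \<mu> # \<alpha>s) q * a $ \<mu> * vmon v \<alpha>s)"
    by (rule sum_symmetric_coeffs_vmon_diff)
  ultimately show ?thesis
    unfolding sum.distrib q_def v_def a_def by simp
qed

lemma has_real_derivative_momentum:
  fixes G :: "'m::finite list \<Rightarrow> real^'m \<Rightarrow> real" and s :: "real \<Rightarrow> real^'m"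
  assumes "N \<ge> 1" "open U" "\<forall>\<alpha>s. smooth_on U (G \<alpha>s)" "symmetric_tensor (2*N) G"
    and "\<forall>\<mu>. smooth_on U (A \<mu>)" "open T" "smooth_curve T s" "s ` T \<subseteq> U"
    and "\<forall>t\<in>T. Gform G N (s t) (vel s t) = 1" "\<tau> \<in> T"
  shows "((\<lambda>t. pd l (\<lambda>w. Lag G A N (s t) w) (vel s t)) has_real_derivative
      (\<Sum>\<mu>\<in>UNIV. \<Sum>\<alpha>s\<in>idx (2*N - 1). pd \<mu> (G (l # \<alpha>s)) (s \<tau>) * vel s \<tau> $ \<mu> * vmon (vel s \<tau>) \<alpha>s)
      + real (2*N - 1) *
        (\<Sum>\<mu>\<in>UNIV. \<Sum>\<alpha>s\<in>idx (2*N - 2). G (l # \<mu> # \<alpha>s) (s \<tau>) * acc s \<tau> $ \<mu> * vmon (vel s \<tau>) \<alpha>s)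
      + (\<Sum>\<mu>\<in>UNIV. pd \<mu> (A l) (s \<tau>) * vel s \<tau> $ \<mu>)) (at \<tau>)"
proof -
  have degree: "Suc (2*N - 2) = 2*N - 1" "Suc (Suc (2*N - 2)) = 2*N" using assms(1) by simp_all
  have "s \<tau> \<in> U" using assms(8,10) by auto
  note contraction = has_real_derivative_contraction_along_curve[of U G "2*N - 2",
      unfolded degree(2), unfolded degree(1), OF assms(2,3,4,7,10) \<open>s \<tau> \<in> U\<close>]
  note potential = smooth_on_chain_rule[OF assms(2) assms(5)[rule_format] \<open>s \<tau> \<in> U\<close>
      smooth_curve_has_vel[OF assms(7,10)]]
  from DERIV_add[OF contraction potential] show ?thesis
  proof (rule has_field_derivative_transform_within_open[OF _ assms(6,10)])
    fix t assume "t \<in> T"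
    then show "(\<Sum>\<alpha>s\<in>idx (2*N - 1). G (l # \<alpha>s) (s t) * vmon (vel s t) \<alpha>s) + A l (s t)
        = pd l (\<lambda>w. Lag G A N (s t) w) (vel s t)"
      using pd_Lag_velocity[OF assms(4) _ assms(1)] assms(9) by simp
  qed
qed

lemma EL_eq_Eexpr_if_Gform_eq_1:
  fixes G :: "'m::finite list \<Rightarrow> real^'m \<Rightarrow> real" and s :: "real \<Rightarrow> real^'m"
  assumes "N \<ge> 1" "open U" "\<forall>\<alpha>s. smooth_on U (G \<alpha>s)" "symmetric_tensor (2*N) G"
    and "\<forall>\<mu>. smooth_on U (A \<mu>)" "open T" "smooth_curve T s" "s ` T \<subseteq> U"
    and "\<forall>t\<in>T. Gform G N (s t) (vel s t) = 1" "\<tau> \<in> T"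
  shows "EL G A N s l \<tau> = Eexpr G A N l (s \<tau>) (vel s \<tau>) (acc s \<tau>)"
proof -
  define q v a where "q = s \<tau>" and "v = vel s \<tau>" and "a = acc s \<tau>"
  define X where "X = (\<Sum>\<mu>\<in>UNIV. \<Sum>\<alpha>s\<in>idx (2*N - 1). pd l (G (\<mu> # \<alpha>s)) q * v $ \<mu> * vmon v \<alpha>s)"
  define P where "P = (\<Sum>\<mu>\<in>UNIV. \<Sum>\<alpha>s\<in>idx (2*N - 1). pd \<mu> (G (l # \<alpha>s)) q * v $ \<mu> * vmon v \<alpha>s)"
  define S where "S = (\<Sum>\<mu>\<in>UNIV. \<Sum>\<alpha>s\<in>idx (2*N - 2). G (l # \<mu> # \<alpha>s) q * a $ \<mu> * vmon v \<alpha>s)"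
  have "q \<in> U" "Gform G N q v = 1" using assms(8-10) by (auto simp: q_def v_def)
  have idx_2N: "idx (2*N) = idx (Suc (2*N - 1))" using assms(1) by (simp add: Suc_diff_Suc)
  have "(\<Sum>\<alpha>s\<in>idx (2*N). pd l (G \<alpha>s) q * vmon v \<alpha>s) = X"
    unfolding idx_2N sum_idx_Suc X_def by (simp add: mult_ac)
  then have "pd l (\<lambda>q. Lag G A N q v) q = 1 / real (2*N) * X + (\<Sum>\<mu>\<in>UNIV. v $ \<mu> * pd l (A \<mu>) q)"
    using pd_Lag_position[OF assms(3,5) \<open>q \<in> U\<close> \<open>Gform G N q v = 1\<close>] by simp
  moreover have "deriv (\<lambda>t. pd l (\<lambda>w. Lag G A N (s t) w) (vel s t)) \<tau>
      = P + real (2*N - 1) * S + (\<Sum>\<mu>\<in>UNIV. pd \<mu> (A l) q * v $ \<mu>)"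
    unfolding P_def S_def q_def v_def a_def
    by (rule DERIV_imp_deriv[OF has_real_derivative_momentum[OF assms]])
  moreover have "(\<Sum>\<mu>\<in>UNIV. \<Sum>\<alpha>s\<in>idx (2*N - 1).
        (1 / real (2*N) * pd l (G (\<mu> # \<alpha>s)) q - pd \<mu> (G (l # \<alpha>s)) q) * v $ \<mu> * vmon v \<alpha>s)
      = 1 / real (2*N) * X - P"
    unfolding X_def P_def by (simp add: sum_subtractf[symmetric] sum_distrib_left algebra_simps)
  moreover have "(\<Sum>\<mu>\<in>UNIV. v $ \<mu> * pd l (A \<mu>) q) - (\<Sum>\<mu>\<in>UNIV. pd \<mu> (A l) q * v $ \<mu>)
      = (\<Sum>\<mu>\<in>UNIV. Fld A l \<mu> q * v $ \<mu>)"
    unfolding Fld_def by (simp add: sum_subtractf[symmetric] algebra_simps)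
  ultimately show ?thesis
    unfolding EL_def Eexpr_def \<open>Gform G N q v = 1\<close> S_def[symmetric] q_def[symmetric]
      v_def[symmetric] a_def[symmetric]
    by simp
qed

text \<open>Positivity of \<open>G\<close> and the nonvanishing velocity only serve to place the curve where the
  Lagrangian is defined.\<close>
theorem lemma5p4:
  fixes U :: "(real^'m::finite) set" and T :: "real set"
    and G :: "'m list \<Rightarrow> real^'m \<Rightarrow> real" and A :: "'m \<Rightarrow> real^'m \<Rightarrow> real"
    and N :: nat and s :: "real \<Rightarrow> real^'m"
  assumes "N \<ge> 1"
    and "open U"
    and "\<forall>\<alpha>s. smooth_on U (G \<alpha>s)"
    and "symmetric_tensor (2*N) G"
    and "\<forall>q\<in>U. \<forall>v. v \<noteq> 0 \<longrightarrow> Gform G N q v > 0"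
    and "\<forall>\<mu>. smooth_on U (A \<mu>)"
    and "open T"
    and "smooth_curve T s"
    and "s ` T \<subseteq> U"
    and "\<forall>\<tau>\<in>T. vel s \<tau> \<noteq> 0"
    and "\<forall>\<tau>\<in>T. \<forall>l. EL G A N s l \<tau> = 0"
    and "\<forall>\<tau>\<in>T. Gform G N (s \<tau>) (vel s \<tau>) = 1"
  shows "\<forall>\<tau>\<in>T. \<forall>\<beta>. Eexpr G A N \<beta> (s \<tau>) (vel s \<tau>) (acc s \<tau>) = 0"
  using EL_eq_Eexpr_if_Gform_eq_1[OF assms(1-4,6-9,12)] assms(11) by metis

end
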